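(* For $a,b>0$, with $D:=a\partial_a+b\partial_b$, $$\mathfrak H_{(0,0,0)}(a,b)=-[1,a,b]\log,\qquad \mathfrak H_{(0,1,0)}=-\partial_a\mathfrak H_{(0,0,0)},\qquad \mathfrak H_{(1,0,0)}=(D+2)\,\mathfrak H_{(0,0,0)},$$ $$\mathfrak H_{(2,0,0)}=\tfrac12(D+3)\,\mathfrak H_{(1,0,0)}=-\tfrac12(D+3)(D+2)[1,a,b]\log,\qquad \mathfrak H_{(1,1,0)}=-\partial_a\mathfrak H_{(1,0,0)}.$$
   Context: $\mathfrak H_\alpha(a,b):=\int_0^\infty x^{|\alpha|+1}(1+x)^{-\alpha_0-1}(1+ax)^{-\alpha_1-1}(1+bx)^{-\alpha_2-1}\,dx$ for $\alpha\in\mathbb N^3$, $a,b>0$, $|\alpha|=\alpha_0+\alpha_1+\alpha_2$. Divided differences: for $f$ smooth on an open interval, $[y_0]f=f(y_0)$, $[y_0,\dots,y_n]f=\int_{\{t\ge0,\sum t_j=1\}}f^{(n)}(\sum t_jy_j)\,dt_1\cdots dt_n$ (for distinct points $=\sum_kf(y_k)\prod_{j\ne k}(y_k-y_j)^{-1}$). *)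

theory Defs
  imports "HOL-Analysis.Analysis"
begin

definition frakH :: "nat \<Rightarrow> nat \<Rightarrow> nat \<Rightarrow> real \<Rightarrow> real \<Rightarrow> real" where
  "frakH al0 al1 al2 a b =
     integral {0<..} (\<lambda>x::real. x ^ (al0 + al1 + al2 + 1) * (1 + x) powi (- int al0 - 1)
        * (1 + a * x) powi (- int al1 - 1) * (1 + b * x) powi (- int al2 - 1))"

text \<open>Divided difference on three points, via the simplex (Hermite--Genocchi) formula:
  \<open>[y0,y1,y2] f = \<integral>_{t1,t2 \<ge> 0, t1+t2 \<le> 1} f''(t0 y0 + t1 y1 + t2 y2) dt1 dt2\<close>, \<open>t0 = 1 - t1 - t2\<close>.\<close>
definition divdiff3 :: "(real \<Rightarrow> real) \<Rightarrow> real \<Rightarrow> real \<Rightarrow> real \<Rightarrow> real" where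
  "divdiff3 f y0 y1 y2 =
     integral {(t1, t2). 0 \<le> t1 \<and> 0 \<le> t2 \<and> t1 + t2 \<le> 1}
       (\<lambda>(t1::real, t2::real). (deriv ^^ 2) f ((1 - t1 - t2) * y0 + t1 * y1 + t2 * y2))"

definition partial_a :: "(real \<Rightarrow> real \<Rightarrow> real) \<Rightarrow> real \<Rightarrow> real \<Rightarrow> real" where
  "partial_a F a b = deriv (\<lambda>x. F x b) a"

definition partial_b :: "(real \<Rightarrow> real \<Rightarrow> real) \<Rightarrow> real \<Rightarrow> real \<Rightarrow> real" where
  "partial_b F a b = deriv (\<lambda>y. F a y) b"

definition Dop :: "(real \<Rightarrow> real \<Rightarrow> real) \<Rightarrow> real \<Rightarrow> real \<Rightarrow> real" where
  "Dop F a b = a * partial_a F a b + b * partial_b F a b"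

end

(*
  The substitution x = t / (1 - t) turns H_alpha into the integral over [0, 1] of
  t^(|alpha| + 1) / ((1 - t + a t)^(alpha1 + 1) (1 - t + b t)^(alpha2 + 1)), which depends on
  alpha0 only through |alpha|. Differentiating under the integral sign gives
  d_a H_alpha = -(alpha1 + 1) H_(alpha + e1), and symmetrically in b; integrating the exact
  derivative of (1 - t) t^(|alpha| + 2) / ((1 - t + a t)^(alpha1 + 1) (1 - t + b t)^(alpha2 + 1))
  over [0, 1] gives (alpha0 + 1) H_(alpha + e0) = (D + |alpha| + 2) H_alpha.
  For alpha = 0 we have log'' y = -1/y^2, and the shear (t1, t2) -> (t1, t1 + t2) reduces the
  simplex integral [1, a, b] log to the same one-dimensional integral, since the inner integral
  along each segment t1 + t2 = r is elementary.
*)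

theory Submission
  imports Defs "HOL-Real_Asymp.Real_Asymp"
begin

lemma convex_comb3_pos:
  fixes a b u v w :: real
  assumes "0 < a" "0 < b" "0 \<le> u" "0 \<le> v" "0 \<le> w" "u + v + w = 1"
  shows "0 < u + v * a + w * b"
proof -
  define m where "m = min 1 (min a b)"
  have "m \<le> 1" "m \<le> a" "m \<le> b" by (auto simp: m_def)
  then have "m * u \<le> 1 * u" "m * v \<le> a * v" "m * w \<le> b * w"
    using assms by (meson mult_right_mono)+
  moreover have "0 < m" using assms by (simp add: m_def)
  ultimately have "m * (u + v + w) \<le> u + v * a + w * b"
    by (simp add: distrib_left mult.commute)
  with \<open>0 < m\<close> show ?thesis using assms(6) by simp
qed

lemma convex_comb_pos: "0 < a \<Longrightarrow> 0 \<le> t \<Longrightarrow> t \<le> 1 \<Longrightarrow> 0 < 1 - t + a * (t::real)"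
  using convex_comb3_pos[of a 1 "1 - t" t 0] by (simp add: mult.commute)

lemma power_int_minus_Suc: "(y::'a::field) powi (- int k - 1) = 1 / y ^ (k + 1)"
  by (metis add.commute diff_conv_add_uminus minus_add_distrib of_nat_Suc power_int_minus
      power_int_of_nat divide_inverse mult_1 Suc_eq_plus1)

lemma integral_Ioi_eq_integral_unit_interval:
  fixes f h :: "real \<Rightarrow> real"
  assumes f_cont: "continuous_on {0<..} f" and f_nonneg: "\<And>x. 0 < x \<Longrightarrow> 0 \<le> f x"
    and h_cont: "continuous_on {0..1} h"
    and h_eq: "\<And>t. 0 < t \<Longrightarrow> t < 1 \<Longrightarrow> h t = f (t / (1 - t)) * (1 / (1 - t)^2)"
  shows "integral {0<..} f = integral {0..1} h"
proof -
  define g where "g t = t / (1 - t)" for t :: real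
  define g' where "g' t = 1 / (1 - t)^2" for t :: real
  have unit_ereal: "einterval 0 1 = {0::real<..<1}" by (auto simp: einterval_def)
  have Ioi_ereal: "einterval 0 \<infinity> = {0::real<..}" by (auto simp: einterval_def zero_ereal_def)
  have in_unit: "0 < x \<and> x < 1" if "0 < ereal x" "ereal x < 1" for x
    using that by (simp add: zero_ereal_def one_ereal_def)
  have "set_integrable lborel {0<..<1} h"
    by (rule set_integrable_subset[OF borel_integrable_atLeastAtMost'[OF h_cont]]) auto
  then have integrable: "set_integrable lborel (einterval 0 1) (\<lambda>t. f (g t) * g' t)"
    unfolding unit_ereal by (rule set_integrable_cong[THEN iffD1, rotated -1]) (auto simp: h_eq g_def g'_def)
  have lim0: "((ereal \<circ> g \<circ> real_of_ereal) \<longlongrightarrow> 0) (at_right 0)"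
  proof -
    have "(g \<longlongrightarrow> 0) (at_right 0)" unfolding g_def by real_asymp
    then show ?thesis unfolding zero_ereal_def ereal_tendsto_simps by simp
  qed
  have lim1: "((ereal \<circ> g \<circ> real_of_ereal) \<longlongrightarrow> \<infinity>) (at_left 1)"
  proof -
    have "LIM x at_left 1. g x :> at_top" unfolding g_def by real_asymp
    then show ?thesis unfolding one_ereal_def ereal_tendsto_simps by simp
  qed
  have "DERIV g x :> g' x" "isCont f (g x)" "isCont g' x" "0 \<le> f (g x)"
    if "0 < ereal x" "ereal x < 1" for x
  proof -
    have x: "0 < x" "x < 1" using in_unit[OF that] by auto
    show "DERIV g x :> g' x" unfolding g_def[abs_def] g'_def using x
      by (auto intro!: derivative_eq_intros simp: field_simps power2_eq_square)
    show "isCont f (g x)" using x unfolding g_def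
      by (intro continuous_on_interior[OF f_cont]) (simp add: interior_open)
    show "isCont g' x" using x unfolding g'_def[abs_def] by (intro continuous_intros) auto
    show "0 \<le> f (g x)" using x f_nonneg unfolding g_def by simp
  qed
  moreover have "0 \<le> g' x" for x by (simp add: g'_def)
  ultimately have subst: "set_integrable lborel (einterval 0 \<infinity>) f"
      "(LBINT x=0..\<infinity>. f x) = (LBINT t=0..1. f (g t) * g' t)"
    using interval_integral_substitution_nonneg[of 0 1 g g' f 0 \<infinity>, OF _ _ _ _ _ _ lim0 lim1 integrable]
    by auto
  have "integral {0<..} f = (LBINT x=0..\<infinity>. f x)"
    using set_borel_integral_eq_integral(2)[OF subst(1)]
    by (simp add: Ioi_ereal interval_lebesgue_integral_0_infty)
  also have "\<dots> = (LINT t:einterval 0 1|lborel. f (g t) * g' t)"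
    by (simp add: subst(2) interval_lebesgue_integral_le_eq)
  also have "\<dots> = integral {0<..<1} (\<lambda>t. f (g t) * g' t)"
    using set_borel_integral_eq_integral(2)[OF integrable] by (simp add: unit_ereal)
  also have "\<dots> = integral {0<..<1} h"
    by (rule integral_cong) (simp add: h_eq g_def g'_def)
  also have "\<dots> = integral {0..1} h" by (simp add: integral_open_interval_real)
  finally show ?thesis .
qed

definition frakH_kernel :: "nat \<Rightarrow> nat \<Rightarrow> nat \<Rightarrow> real \<Rightarrow> real \<Rightarrow> real \<Rightarrow> real" where
  "frakH_kernel k0 k1 k2 a b t = t ^ (k0 + k1 + k2 + 1) / ((1 - t + a * t) ^ (k1 + 1) * (1 - t + b * t) ^ (k2 + 1))"

lemma frakH_kernel_continuous:
  "0 < a \<Longrightarrow> 0 < b \<Longrightarrow> continuous_on {0..1} (frakH_kernel k0 k1 k2 a b)"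
  unfolding frakH_kernel_def
  by (intro continuous_intros) (auto dest: convex_comb_pos[of a] convex_comb_pos[of b])

lemma frakH_kernel_nonneg: "0 < a \<Longrightarrow> 0 < b \<Longrightarrow> t \<in> {0..1} \<Longrightarrow> 0 \<le> frakH_kernel k0 k1 k2 a b t"
  using convex_comb_pos[of a t] convex_comb_pos[of b t] by (simp add: frakH_kernel_def)

lemma frakH_kernel_substitution:
  fixes a b t :: real
  assumes "0 < a" "0 < b" "0 < t" "t < 1"
  defines "x \<equiv> t / (1 - t)"
  shows "x ^ (k0 + k1 + k2 + 1) / ((1 + x) ^ (k0 + 1) * (1 + a * x) ^ (k1 + 1) * (1 + b * x) ^ (k2 + 1))
           * (1 / (1 - t)^2) = frakH_kernel k0 k1 k2 a b t"
proof -
  define A B where "A = 1 - t + a * t" and "B = 1 - t + b * t"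
  have "0 < A" "0 < B" using assms convex_comb_pos[of a t] convex_comb_pos[of b t] by (auto simp: A_def B_def)
  have "1 + x = 1 / (1 - t)" "1 + a * x = A / (1 - t)" "1 + b * x = B / (1 - t)"
    using assms by (auto simp: x_def A_def B_def field_simps)
  then have "x ^ (k0 + k1 + k2 + 1) / ((1 + x) ^ (k0 + 1) * (1 + a * x) ^ (k1 + 1) * (1 + b * x) ^ (k2 + 1))
      = t ^ (k0 + k1 + k2 + 1) * ((1 - t) ^ (k0 + 1) * (1 - t) ^ (k1 + 1) * (1 - t) ^ (k2 + 1))
          / ((1 - t) ^ (k0 + k1 + k2 + 1) * A ^ (k1 + 1) * B ^ (k2 + 1))"
    by (simp add: x_def power_divide)
  also have "(1 - t) ^ (k0 + 1) * (1 - t) ^ (k1 + 1) * (1 - t) ^ (k2 + 1) = (1 - t) ^ (k0 + k1 + k2 + 1) * (1 - t)^2"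
    unfolding power_add[symmetric] by (simp add: algebra_simps)
  finally show ?thesis
    using assms \<open>0 < A\<close> \<open>0 < B\<close> by (simp add: frakH_kernel_def A_def[symmetric] B_def[symmetric])
qed

lemma has_integral_frakH_kernel:
  assumes "0 < a" "0 < b"
  shows "(frakH_kernel k0 k1 k2 a b has_integral frakH k0 k1 k2 a b) {0..1}"
proof -
  define f where "f x = x ^ (k0 + k1 + k2 + 1) / ((1 + x) ^ (k0 + 1) * (1 + a * x) ^ (k1 + 1) * (1 + b * x) ^ (k2 + 1))"
    for x :: real
  have "frakH k0 k1 k2 a b = integral {0<..} f"
    unfolding frakH_def f_def power_int_minus_Suc by simp
  also have "\<dots> = integral {0..1} (frakH_kernel k0 k1 k2 a b)"
  proof (rule integral_Ioi_eq_integral_unit_interval)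
    show "continuous_on {0<..} f"
    proof -
      have "1 + c * x \<noteq> 0" if "0 < c" "0 < x" for c x :: real
        using mult_pos_pos[OF that] by simp
      then show ?thesis unfolding f_def using assms by (intro continuous_intros) auto
    qed
  next
    show "0 \<le> f x" if "0 < x" for x
      using that assms by (simp add: f_def)
  next
    show "frakH_kernel k0 k1 k2 a b t = f (t / (1 - t)) * (1 / (1 - t)^2)" if "0 < t" "t < 1" for t
      using frakH_kernel_substitution[OF assms that] by (simp add: f_def)
  qed (rule frakH_kernel_continuous[OF assms])
  finally show ?thesis
    using integrable_integral[OF integrable_continuous_real[OF frakH_kernel_continuous[OF assms]]]
    by (simp only:)
qed

lemma frakH_kernel_has_derivative_a:
  assumes "0 < a" "0 < b" "0 \<le> t" "t \<le> 1"
  shows "((\<lambda>a. frakH_kernel k0 k1 k2 a b t) has_field_derivative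
           - (real k1 + 1) * frakH_kernel k0 (Suc k1) k2 a b t) (at a within U)"
proof -
  define A B where "A = 1 - t + a * t" and "B = 1 - t + b * t"
  have "0 < A" "0 < B"
    using assms convex_comb_pos[of a t] convex_comb_pos[of b t] by (auto simp: A_def B_def)
  show ?thesis
    unfolding frakH_kernel_def
    apply (rule derivative_eq_intros refl)+
    using \<open>0 < A\<close> \<open>0 < B\<close> unfolding A_def[symmetric] B_def[symmetric]
    apply (simp_all add: field_simps)
    done
qed

lemma frakH_kernel_continuous_on_Times:
  assumes "0 < b"
  shows "continuous_on ({0<..} \<times> {0..1}) (\<lambda>(a, t). frakH_kernel k0 k1 k2 a b t)"
proof -
  have "(1 - t + a * t) ^ (k1 + 1) * (1 - t + b * t) ^ (k2 + 1) \<noteq> 0"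
    if "(a, t) \<in> {0<..} \<times> {0..1}" for a t
    using that assms convex_comb_pos[of a t] convex_comb_pos[of b t] by auto
  then show ?thesis
    unfolding frakH_kernel_def case_prod_unfold by (intro continuous_intros) auto
qed

lemma frakH_has_derivative_a:
  assumes a: "0 < a" and b: "0 < b"
  shows "((\<lambda>a. frakH k0 k1 k2 a b) has_field_derivative - (real k1 + 1) * frakH k0 (Suc k1) k2 a b) (at a)"
proof -
  have "((\<lambda>a. integral (cbox 0 1) (frakH_kernel k0 k1 k2 a b)) has_field_derivative
      integral (cbox 0 1) (\<lambda>t. - (real k1 + 1) * frakH_kernel k0 (Suc k1) k2 a b t)) (at a within {0<..})"
  proof (rule leibniz_rule_field_derivative)
    fix x t :: real
    assume "x \<in> {0<..}" "t \<in> cbox 0 1"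
    then show "((\<lambda>a. frakH_kernel k0 k1 k2 a b t) has_field_derivative
        - (real k1 + 1) * frakH_kernel k0 (Suc k1) k2 x b t) (at x within {0<..})"
      using b by (intro frakH_kernel_has_derivative_a) auto
  next
    fix x :: real
    assume "x \<in> {0<..}"
    then show "frakH_kernel k0 k1 k2 x b integrable_on cbox 0 1"
      using b by (auto intro: integrable_continuous_real frakH_kernel_continuous)
  next
    show "continuous_on ({0<..} \<times> cbox 0 1) (\<lambda>(a, t). - (real k1 + 1) * frakH_kernel k0 (Suc k1) k2 a b t)"
      using continuous_on_mult_left[OF frakH_kernel_continuous_on_Times[OF b]]
      by (simp add: case_prod_unfold)
  qed (use a in auto)
  moreover have "at a within {0<..} = at a"
    using a by (intro at_within_open) auto
  moreover have "integral {0..1} (frakH_kernel k0 (Suc k1) k2 a b) = frakH k0 (Suc k1) k2 a b"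
    by (rule integral_unique[OF has_integral_frakH_kernel[OF a b]])
  ultimately have "((\<lambda>a. integral {0..1} (frakH_kernel k0 k1 k2 a b)) has_field_derivative
      - (real k1 + 1) * frakH k0 (Suc k1) k2 a b) (at a)"
    by simp
  then show ?thesis
  proof (rule has_field_derivative_transform_within_open)
    show "integral {0..1} (frakH_kernel k0 k1 k2 x b) = frakH k0 k1 k2 x b" if "x \<in> {0<..}" for x
      using integral_unique[OF has_integral_frakH_kernel[OF _ b]] that by simp
  qed (use a in auto)
qed

lemma frakH_swap:
  assumes "0 < a" "0 < b"
  shows "frakH k0 k1 k2 a b = frakH k0 k2 k1 b a"
proof -
  have "frakH_kernel k0 k1 k2 a b = frakH_kernel k0 k2 k1 b a"
    by (simp add: frakH_kernel_def fun_eq_iff ac_simps)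
  then show ?thesis
    using has_integral_frakH_kernel[OF assms] has_integral_frakH_kernel[OF assms(2,1)]
    by (metis has_integral_unique)
qed

lemma frakH_has_derivative_b:
  assumes a: "0 < a" and b: "0 < b"
  shows "((\<lambda>b. frakH k0 k1 k2 a b) has_field_derivative - (real k2 + 1) * frakH k0 k1 (Suc k2) a b) (at b)"
proof -
  have "((\<lambda>b. frakH k0 k2 k1 b a) has_field_derivative - (real k2 + 1) * frakH k0 k1 (Suc k2) a b) (at b)"
    using frakH_has_derivative_a[OF b a, of k0 k2 k1] frakH_swap[OF a b, of k0 k1 "Suc k2"] by simp
  then show ?thesis
  proof (rule has_field_derivative_transform_within_open)
    show "frakH k0 k2 k1 y a = frakH k0 k1 k2 a y" if "y \<in> {0<..}" for y
      using frakH_swap[OF a, of y] that by simp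
  qed (use b in auto)
qed

lemma partial_a_frakH:
  "0 < a \<Longrightarrow> 0 < b \<Longrightarrow> partial_a (frakH k0 k1 k2) a b = - (real k1 + 1) * frakH k0 (Suc k1) k2 a b"
  unfolding partial_a_def by (rule DERIV_imp_deriv[OF frakH_has_derivative_a])

lemma partial_b_frakH:
  "0 < a \<Longrightarrow> 0 < b \<Longrightarrow> partial_b (frakH k0 k1 k2) a b = - (real k2 + 1) * frakH k0 k1 (Suc k2) a b"
  unfolding partial_b_def by (rule DERIV_imp_deriv[OF frakH_has_derivative_b])

lemma Dop_frakH:
  "0 < a \<Longrightarrow> 0 < b \<Longrightarrow> Dop (frakH k0 k1 k2) a b =
     - (real k1 + 1) * a * frakH k0 (Suc k1) k2 a b - (real k2 + 1) * b * frakH k0 k1 (Suc k2) a b"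
  by (simp add: Dop_def partial_a_frakH partial_b_frakH algebra_simps)

lemma Dop_cong_pos:
  assumes "0 < a" "0 < b" and FG: "\<And>u v. 0 < u \<Longrightarrow> 0 < v \<Longrightarrow> F u v = G u v"
  shows "Dop F a b = Dop G a b"
proof -
  have "eventually (\<lambda>u. F u b = G u b) (nhds a)" "eventually (\<lambda>v. F a v = G a v) (nhds b)"
    using assms by (auto intro!: eventually_nhds_in_open[of "{0<..}", THEN eventually_mono])
  then show ?thesis
    unfolding Dop_def partial_a_def partial_b_def by (simp cong: deriv_cong_ev)
qed

lemma Dop_uminus:
  assumes "(\<lambda>u. F u b) field_differentiable at a" "(\<lambda>v. F a v) field_differentiable at b"
  shows "Dop (\<lambda>u v. - F u v) a b = - Dop F a b"
  using assms by (simp add: Dop_def partial_a_def partial_b_def)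

lemma Dop_uminus_frakH:
  assumes "0 < a" "0 < b"
  shows "Dop (\<lambda>u v. - frakH k0 k1 k2 u v) a b = - Dop (frakH k0 k1 k2) a b"
  using frakH_has_derivative_a[OF assms, of k0 k1 k2] frakH_has_derivative_b[OF assms, of k0 k1 k2]
  by (intro Dop_uminus) (auto simp: field_differentiable_def)

lemma frakH_kernel_eq_inverse:
  "frakH_kernel k0 k1 k2 a b t =
     t ^ (k0 + k1 + k2 + 1) * inverse (1 - t + a * t) ^ (k1 + 1) * inverse (1 - t + b * t) ^ (k2 + 1)"
  by (simp add: frakH_kernel_def divide_inverse power_inverse)

lemma frakH_kernel_exact_derivative:
  assumes "0 < a" "0 < b" "0 \<le> t" "t \<le> 1"
  shows "((\<lambda>t. (1 - t) * frakH_kernel (Suc k0) k1 k2 a b t) has_real_derivative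
      real (k0 + k1 + k2 + 2) * frakH_kernel k0 k1 k2 a b t - (real k0 + 1) * frakH_kernel (Suc k0) k1 k2 a b t
      - (real k1 + 1) * a * frakH_kernel k0 (Suc k1) k2 a b t
      - (real k2 + 1) * b * frakH_kernel k0 k1 (Suc k2) a b t) (at t within S)"
proof -
  have nz: "1 - t + a * t \<noteq> 0" "1 - t + b * t \<noteq> 0"
    using assms convex_comb_pos[of a t] convex_comb_pos[of b t] by auto
  define U V where "U = inverse (1 - t + a * t)" and "V = inverse (1 - t + b * t)"
  define T P Q where "T = t ^ (k0 + k1 + k2)" and "P = U ^ k1" and "Q = V ^ k2"
  have inverse: "(1 - t + a * t) * U = 1" "(1 - t + b * t) * V = 1"
    using nz by (simp_all add: U_def V_def)
  show ?thesis
    unfolding frakH_kernel_eq_inverse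
    apply (rule derivative_eq_intros refl nz)+
    apply (unfold U_def[symmetric] V_def[symmetric])
    apply (simp add: T_def[symmetric] P_def[symmetric] Q_def[symmetric])
    using inverse apply algebra
    done
qed

lemma frakH_first_index_Suc:
  assumes a: "0 < a" and b: "0 < b"
  shows "(real k0 + 1) * frakH (Suc k0) k1 k2 a b
    = Dop (frakH k0 k1 k2) a b + real (k0 + k1 + k2 + 2) * frakH k0 k1 k2 a b"
proof -
  let ?K = "\<lambda>k0 k1 k2. frakH_kernel k0 k1 k2 a b"
  let ?H = "\<lambda>k0 k1 k2. frakH k0 k1 k2 a b"
  have "((\<lambda>t. real (k0 + k1 + k2 + 2) * ?K k0 k1 k2 t - (real k0 + 1) * ?K (Suc k0) k1 k2 t
      - (real k1 + 1) * a * ?K k0 (Suc k1) k2 t - (real k2 + 1) * b * ?K k0 k1 (Suc k2) t) has_integral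
      real (k0 + k1 + k2 + 2) * ?H k0 k1 k2 - (real k0 + 1) * ?H (Suc k0) k1 k2
      - (real k1 + 1) * a * ?H k0 (Suc k1) k2 - (real k2 + 1) * b * ?H k0 k1 (Suc k2)) {0..1}"
    by (intro has_integral_diff has_integral_mult_right has_integral_frakH_kernel a b)
  moreover have "((\<lambda>t. real (k0 + k1 + k2 + 2) * ?K k0 k1 k2 t - (real k0 + 1) * ?K (Suc k0) k1 k2 t
      - (real k1 + 1) * a * ?K k0 (Suc k1) k2 t - (real k2 + 1) * b * ?K k0 k1 (Suc k2) t) has_integral
      (1 - 1) * ?K (Suc k0) k1 k2 1 - (1 - 0) * ?K (Suc k0) k1 k2 0) {0..1}"
  proof (rule fundamental_theorem_of_calculus)
    fix t :: real
    assume "t \<in> {0..1}"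
    then show "((\<lambda>t. (1 - t) * ?K (Suc k0) k1 k2 t) has_vector_derivative
        real (k0 + k1 + k2 + 2) * ?K k0 k1 k2 t - (real k0 + 1) * ?K (Suc k0) k1 k2 t
        - (real k1 + 1) * a * ?K k0 (Suc k1) k2 t - (real k2 + 1) * b * ?K k0 k1 (Suc k2) t) (at t within {0..1})"
      unfolding has_real_derivative_iff_has_vector_derivative[symmetric]
      using a b by (intro frakH_kernel_exact_derivative) auto
  qed simp
  ultimately have "real (k0 + k1 + k2 + 2) * ?H k0 k1 k2 - (real k0 + 1) * ?H (Suc k0) k1 k2
      - (real k1 + 1) * a * ?H k0 (Suc k1) k2 - (real k2 + 1) * b * ?H k0 k1 (Suc k2)
      = (1 - 1) * ?K (Suc k0) k1 k2 1 - (1 - 0) * ?K (Suc k0) k1 k2 0"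
    by (rule has_integral_unique)
  also have "\<dots> = 0" by (simp add: frakH_kernel_def)
  finally show ?thesis
    unfolding Dop_frakH[OF a b] by argo
qed

lemma nn_integral_lborel_pair_shear:
  fixes g :: "real \<times> real \<Rightarrow> ennreal"
  assumes [measurable]: "g \<in> borel_measurable borel"
  shows "(\<integral>\<^sup>+p. g p \<partial>lborel) = (\<integral>\<^sup>+r. \<integral>\<^sup>+s. g (s, r - s) \<partial>lborel \<partial>lborel)"
proof -
  have [measurable]: "g \<in> borel_measurable (lborel \<Otimes>\<^sub>M lborel)"
    by (simp add: lborel_prod)
  have "(\<integral>\<^sup>+p. g p \<partial>lborel) = (\<integral>\<^sup>+s. \<integral>\<^sup>+y. g (s, y) \<partial>lborel \<partial>lborel)"
    using lborel.nn_integral_fst[of g lborel] by (simp add: lborel_prod)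
  also have "\<dots> = (\<integral>\<^sup>+s. \<integral>\<^sup>+r. g (s, r - s) \<partial>lborel \<partial>lborel)"
  proof -
    have "(\<integral>\<^sup>+y. g (s, y) \<partial>lborel) = (\<integral>\<^sup>+r. g (s, r - s) \<partial>lborel)" for s
      using nn_integral_real_affine[of "\<lambda>y. g (s, y)" 1 "- s"] by simp
    then show ?thesis by simp
  qed
  also have "\<dots> = (\<integral>\<^sup>+r. \<integral>\<^sup>+s. g (s, r - s) \<partial>lborel \<partial>lborel)"
    by (rule lborel_pair.Fubini') measurable
  finally show ?thesis .
qed

lemma has_integral_frakH_kernel_000_segment:
  assumes a: "0 < a" and b: "0 < b" and r: "0 \<le> r" "r \<le> 1"
  shows "((\<lambda>s. 1 / ((1 - r) + s * a + (r - s) * b)^2) has_integral frakH_kernel 0 0 0 a b r) {0..r}"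
proof -
  define P Q where "P = 1 - r + b * r" and "Q = a - b"
  have weight: "(1 - r) + s * a + (r - s) * b = P + s * Q" for s
    by (simp add: P_def Q_def algebra_simps)
  have pos: "0 < P + s * Q" if "0 \<le> s" "s \<le> r" for s
    using convex_comb3_pos[OF a b, of "1 - r" s "r - s"] that r by (simp add: weight)
  then have "0 < P" using r by force
  have "((\<lambda>s. 1 / (P + s * Q)^2) has_integral (r / (P * (P + r * Q)) - 0 / (P * (P + 0 * Q)))) {0..r}"
  proof (rule fundamental_theorem_of_calculus)
    fix s
    assume "s \<in> {0..r}"
    then have "P + s * Q \<noteq> 0" using pos by fastforce
    with \<open>0 < P\<close> have "((\<lambda>s. s / (P * (P + s * Q))) has_real_derivative 1 / (P + s * Q)^2) (at s within {0..r})"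
      by (auto intro!: derivative_eq_intros simp: divide_simps power2_eq_square) (simp add: algebra_simps)
    then show "((\<lambda>s. s / (P * (P + s * Q))) has_vector_derivative 1 / (P + s * Q)^2) (at s within {0..r})"
      by (simp add: has_real_derivative_iff_has_vector_derivative)
  qed (use r in simp)
  moreover have "r / (P * (P + r * Q)) - 0 / (P * (P + 0 * Q)) = frakH_kernel 0 0 0 a b r"
    by (simp add: frakH_kernel_def P_def Q_def algebra_simps)
  ultimately show ?thesis by (simp add: weight)
qed

lemma frakH_000_has_integral_simplex:
  assumes a: "0 < a" and b: "0 < b"
  shows "((\<lambda>(t1, t2). 1 / ((1 - t1 - t2) * 1 + t1 * a + t2 * b)^2) has_integral frakH 0 0 0 a b)
           {(t1, t2). 0 \<le> t1 \<and> 0 \<le> t2 \<and> t1 + t2 \<le> 1}"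
proof -
  define T :: "(real \<times> real) set" where "T = {(t1, t2). 0 \<le> t1 \<and> 0 \<le> t2 \<and> t1 + t2 \<le> 1}"
  define f where "f p = (if 0 \<le> fst p \<and> 0 \<le> snd p \<and> fst p + snd p \<le> 1
    then 1 / ((1 - fst p - snd p) * 1 + fst p * a + snd p * b)^2 else 0)" for p :: "real \<times> real"
  have "f \<in> borel_measurable (lborel \<Otimes>\<^sub>M lborel)"
    unfolding f_def by measurable
  then have f_meas: "f \<in> borel_measurable borel"
    by (simp add: lborel_prod)
  have shear: "(\<integral>\<^sup>+s. ennreal (f (s, r - s)) \<partial>lborel) = ennreal (frakH_kernel 0 0 0 a b r) * indicator {0..1} r"
    for r
  proof (cases "0 \<le> r \<and> r \<le> 1")
    case True
    have "ennreal (f (s, r - s)) = ennreal (1 / ((1 - r) + s * a + (r - s) * b)^2) * indicator {0..r} s" for s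
      using True by (auto simp: f_def indicator_def algebra_simps)
    then have "(\<integral>\<^sup>+s. ennreal (f (s, r - s)) \<partial>lborel) = ennreal (frakH_kernel 0 0 0 a b r)"
      using True by (simp add: nn_integral_has_integral_lebesgue' has_integral_frakH_kernel_000_segment[OF a b])
    then show ?thesis using True by simp
  next
    case False
    then have "f (s, r - s) = 0" for s by (auto simp: f_def)
    then show ?thesis using False by simp
  qed
  have "(\<integral>\<^sup>+p. ennreal (f p) \<partial>lborel) = (\<integral>\<^sup>+r. ennreal (frakH_kernel 0 0 0 a b r) * indicator {0..1} r \<partial>lborel)"
    using f_meas by (simp add: nn_integral_lborel_pair_shear shear)
  also have "\<dots> = ennreal (frakH 0 0 0 a b)"
    using a b by (intro nn_integral_has_integral_lebesgue' frakH_kernel_nonneg has_integral_frakH_kernel)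
  finally have "(f has_integral frakH 0 0 0 a b) UNIV"
    using f_meas has_integral_nonneg[OF has_integral_frakH_kernel[OF a b] frakH_kernel_nonneg[OF a b]]
    by (intro nn_integral_has_integral) (auto simp: f_def)
  moreover have "f = (\<lambda>p. if p \<in> T then (\<lambda>(t1, t2). 1 / ((1 - t1 - t2) * 1 + t1 * a + t2 * b)^2) p else 0)"
    by (auto simp: f_def T_def fun_eq_iff)
  ultimately show ?thesis
    unfolding T_def[symmetric] by (simp add: has_integral_restrict_UNIV)
qed

lemma deriv2_ln:
  assumes "0 < (y::real)"
  shows "(deriv ^^ 2) ln y = - 1 / y^2"
proof -
  have "((\<lambda>z. deriv ln z) has_field_derivative - (inverse y ^ 2)) (at y)"
  proof (rule has_field_derivative_transform_within_open)
    show "(inverse has_field_derivative - (inverse y ^ 2)) (at y)"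
      using DERIV_inverse[of y] assms by (simp add: power2_eq_square)
    show "inverse z = deriv ln z" if "z \<in> {0<..}" for z :: real
      using DERIV_imp_deriv[OF DERIV_ln[of z]] that by simp
  qed (use assms in auto)
  then show ?thesis
    by (simp add: numeral_2_eq_2 DERIV_imp_deriv power_inverse divide_inverse)
qed

lemma divdiff3_ln_eq_frakH:
  assumes a: "0 < a" and b: "0 < b"
  shows "divdiff3 ln 1 a b = - frakH 0 0 0 a b"
proof -
  define T :: "(real \<times> real) set" where "T = {(t1, t2). 0 \<le> t1 \<and> 0 \<le> t2 \<and> t1 + t2 \<le> 1}"
  have "divdiff3 ln 1 a b = integral T (\<lambda>(t1, t2). - (1 / ((1 - t1 - t2) * 1 + t1 * a + t2 * b)^2))"
    unfolding divdiff3_def T_def[symmetric]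
  proof (rule integral_cong, clarify)
    fix t1 t2
    assume "(t1, t2) \<in> T"
    then have "0 < (1 - t1 - t2) * 1 + t1 * a + t2 * b"
      using convex_comb3_pos[OF a b, of "1 - t1 - t2" t1 t2] by (simp add: T_def)
    then show "(deriv ^^ 2) ln ((1 - t1 - t2) * 1 + t1 * a + t2 * b) = - (1 / ((1 - t1 - t2) * 1 + t1 * a + t2 * b)^2)"
      by (simp add: deriv2_ln)
  qed
  also have "\<dots> = - frakH 0 0 0 a b"
    unfolding T_def
    by (rule integral_unique)
      (use has_integral_neg[OF frakH_000_has_integral_simplex[OF a b]] in \<open>simp add: case_prod_unfold\<close>)
  finally show ?thesis .
qed

theorem mainTheorem17:
  fixes a b :: real
  assumes "a > 0" and "b > 0"
  shows "frakH 0 0 0 a b = - divdiff3 ln 1 a b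
    \<and> frakH 0 1 0 a b = - partial_a (frakH 0 0 0) a b
    \<and> frakH 1 0 0 a b = Dop (frakH 0 0 0) a b + 2 * frakH 0 0 0 a b
    \<and> frakH 2 0 0 a b = 1/2 * (Dop (frakH 1 0 0) a b + 3 * frakH 1 0 0 a b)
    \<and> frakH 2 0 0 a b =
           - 1/2 * (Dop (\<lambda>u v. Dop (\<lambda>p q. divdiff3 ln 1 p q) u v + 2 * divdiff3 ln 1 u v) a b
                   + 3 * (Dop (\<lambda>p q. divdiff3 ln 1 p q) a b + 2 * divdiff3 ln 1 a b))
    \<and> frakH 1 1 0 a b = - partial_a (frakH 1 0 0) a b"
proof -
  have H100: "frakH 1 0 0 u v = Dop (frakH 0 0 0) u v + 2 * frakH 0 0 0 u v" if "0 < u" "0 < v" for u v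
    using frakH_first_index_Suc[OF that, of 0 0 0] by simp
  have H200: "frakH 2 0 0 a b = 1/2 * (Dop (frakH 1 0 0) a b + 3 * frakH 1 0 0 a b)"
    using frakH_first_index_Suc[OF assms, of 1 0 0] by (simp add: numeral_2_eq_2)
  have divdiff_H100: "Dop (\<lambda>p q. divdiff3 ln 1 p q) u v + 2 * divdiff3 ln 1 u v = - frakH 1 0 0 u v"
    if "0 < u" "0 < v" for u v
    using Dop_cong_pos[OF that divdiff3_ln_eq_frakH] Dop_uminus_frakH[OF that] H100[OF that]
      divdiff3_ln_eq_frakH[OF that] by simp
  have "Dop (\<lambda>u v. Dop (\<lambda>p q. divdiff3 ln 1 p q) u v + 2 * divdiff3 ln 1 u v) a b = - Dop (frakH 1 0 0) a b"
    using Dop_cong_pos[OF assms divdiff_H100] Dop_uminus_frakH[OF assms] by simp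
  then show ?thesis
    using divdiff3_ln_eq_frakH[OF assms] H100[OF assms] H200 divdiff_H100[OF assms]
      partial_a_frakH[OF assms, of 0 0 0] partial_a_frakH[OF assms, of 1 0 0]
    by (simp add: field_simps)
qed

end
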